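(* Consider the single-task linear bandit: at each round $t=1,\dots,N$ the agent chooses $x_t\in\mathcal A:=\{x\in\mathbb{R}^d:\|x\|\le1\}$ and observes $y_t=x_t^\top\theta+\eta_t$, where the $\eta_t$ are independent, zero-mean, $1$-sub-Gaussian, $\phi_{\min}\le\|\theta\|\le\phi_{\max}$ for positive constants $\phi_{\min},\phi_{\max}$, and $\theta=B\alpha$ for some unknown $B\in\mathbb{R}^{d\times r}$ with orthonormal columns and some $\alpha\in\mathbb{R}^r$. Let $\hat B\in\mathbb{R}^{d\times r}$ (with orthonormal columns) be an estimate of $B$ satisfying $\|\hat B^\top B_\perp\|_F\le\varepsilon$. Suppose the agent plays the Representation Transfer (RT) algorithm with input $\hat B$: with $N_2=\lceil r\sqrt N\rceil$ and $[a'_1,\dots,a'_r]$ an orthonormal basis of $\mathrm{span}(\hat B)$, for $t=1,\dots,N_2$ it takes $x_t=a'_i$ with $i=((t-1)\bmod r)+1$; it then computes $\hat\alpha=(\hat B^\top X\,X^\top\hat B)^{-1}\hat B^\top X Y$ with $X=[x_1,\dots,x_{N_2}]$, $Y=[y_1,\dots,y_{N_2}]^\top$, sets $\hat\theta=\hat B\hat\alpha$, and for $t=N_2+1,\dots,N$ takes $x_t=\arg\max_{x\in\mathcal A}x^\top\hat\theta$. Then the regret $R_N=\sum_{t=1}^N(x^*-x_t)^\top\theta$, with $x^*\in\arg\max_{x\in\mathcal A}x^\top\theta$, satisfies $$\mathbb{E}R_N=O\big(r\sqrt N+N\varepsilon^2\big).$$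
   Context: For a matrix $A$, $A_\perp$ denotes a matrix with orthonormal columns spanning the orthogonal complement of $\mathrm{span}(A)$, and $\|\cdot\|_F$ is the Frobenius norm. $\lceil x\rceil$ denotes the ceiling. $f=O(g)$ means $f\le Mg$ for some constant $M>0$ and all sufficiently large arguments; here the implicit constant does not depend on $N$ or $\varepsilon$. *)

theory Defs
  imports "HOL-Probability.Probability"
begin

definition outer :: "real^'n \<Rightarrow> real^'m \<Rightarrow> real^'m^'n" where
  "outer u v = (\<chi> i j. u $ i * v $ j)"

definition rt_N2 :: "nat \<Rightarrow> nat \<Rightarrow> nat" where
  "rt_N2 r N = nat \<lceil>real r * sqrt (real N)\<rceil>"

text \<open>Exploration action at round t (t = 1..N2): the basis vector a'_i with
  i = ((t-1) mod r)+1; the basis is indexed 0..r-1 here, so a' is a ((t-1) mod r).\<close>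
definition rt_explore :: "nat \<Rightarrow> (nat \<Rightarrow> real^'d) \<Rightarrow> nat \<Rightarrow> real^'d" where
  "rt_explore r a t = a ((t - 1) mod r)"

text \<open>theta_hat = Bh (Bh^T X X^T Bh)^{-1} Bh^T X Y, with X X^T and X Y written
  out as sums over the N2 exploration rounds; y t is the observation of round t.\<close>
definition rt_theta_hat ::
  "real^'r^'d \<Rightarrow> (nat \<Rightarrow> real^'d) \<Rightarrow> nat \<Rightarrow> (nat \<Rightarrow> real) \<Rightarrow> real^'d" where
  "rt_theta_hat Bh a N2 y =
     (let r = CARD('r);
          G = (\<Sum>t\<in>{1..N2}. outer (transpose Bh *v rt_explore r a t)
                                     (transpose Bh *v rt_explore r a t));
          b = (\<Sum>t\<in>{1..N2}. y t *\<^sub>R (transpose Bh *v rt_explore r a t))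
      in Bh *v (matrix_inv G *v b))"

text \<open>Action of RT at round t of a horizon-N run, given a realisation eta of the
  noise sequence; sel is the (argmax) selection rule used in the exploitation phase.\<close>
definition rt_action ::
  "real^'r^'d \<Rightarrow> (nat \<Rightarrow> real^'d) \<Rightarrow> (real^'d \<Rightarrow> real^'d) \<Rightarrow> real^'d
    \<Rightarrow> (nat \<Rightarrow> real) \<Rightarrow> nat \<Rightarrow> nat \<Rightarrow> real^'d" where
  "rt_action Bh a sel \<theta> \<eta> N t =
     (let r = CARD('r); N2 = rt_N2 r N
      in if t \<le> N2 then rt_explore r a t
         else sel (rt_theta_hat Bh a N2 (\<lambda>s. rt_explore r a s \<bullet> \<theta> + \<eta> s)))"

definition rt_regret ::
  "real^'r^'d \<Rightarrow> (nat \<Rightarrow> real^'d) \<Rightarrow> (real^'d \<Rightarrow> real^'d) \<Rightarrow> real^'d \<Rightarrow> real^'d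
    \<Rightarrow> (nat \<Rightarrow> real) \<Rightarrow> nat \<Rightarrow> real" where
  "rt_regret Bh a sel \<theta> xstar \<eta> N =
     (\<Sum>t\<in>{1..N}. (xstar - rt_action Bh a sel \<theta> \<eta> N t) \<bullet> \<theta>)"

definition subgaussian1 :: "'a measure \<Rightarrow> ('a \<Rightarrow> real) \<Rightarrow> bool" where
  "subgaussian1 Pr X \<longleftrightarrow>
     (\<forall>l::real. integrable Pr (\<lambda>\<omega>. exp (l * X \<omega>)) \<and>
                (\<integral>\<omega>. exp (l * X \<omega>) \<partial>Pr) \<le> exp (l\<^sup>2 / 2))"

end

theory Submission
  imports Defs
begin

text \<open>
  Exploring along an orthonormal basis \<open>a\<^sub>0, ..., a\<^sub>r\<^sub>-\<^sub>1\<close> of the span of \<open>Bh\<close>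
  pulls every \<open>a\<^sub>i\<close> about \<open>sqrt N\<close> times, and the least-squares estimate collapses to
  \<open>\<theta>' = \<Sum>\<^sub>i (mean reward of a\<^sub>i) a\<^sub>i = Bh Bh\<^sup>T \<theta> + \<Sum>\<^sub>i (mean noise of a\<^sub>i) a\<^sub>i\<close>.
  Hence \<open>|\<theta>' - \<theta>|\<^sup>2\<close> is at most twice the bias \<open>|\<theta> - Bh Bh\<^sup>T \<theta>|\<^sup>2 \<le> |\<theta>|\<^sup>2 \<epsilon>\<^sup>2\<close>
  plus twice a noise term of expectation \<open>O(r / sqrt N)\<close>.
  On the unit ball the greedy action for \<open>\<theta>'\<close> loses at most \<open>2 |\<theta>' - \<theta>|\<^sup>2 / |\<theta>|\<close>
  per round, so the exploitation rounds cost \<open>O(N \<epsilon>\<^sup>2 + r sqrt N)\<close>, while each of the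
  \<open>O(r sqrt N)\<close> exploration rounds costs at most \<open>2 |\<theta>|\<close>.
\<close>

(* Keep transpose A *v x, the form used in the definitions, rather than x v* A. *)
declare transpose_matrix_vector [simp del]

section \<open>Orthonormal expansions\<close>

lemma outer_mult_vec: "outer u v *v z = (v \<bullet> z) *\<^sub>R u"
  by (simp add: outer_def matrix_vector_mult_def inner_vec_def vec_eq_iff sum_distrib_left mult_ac)

lemma sum_matrix_vector_mult: "sum f S *v z = (\<Sum>x\<in>S. f x *v z)"
  by (induction S rule: infinite_finite_induct) (auto simp: matrix_vector_mult_add_rdistrib)

lemma matrix_vector_mult_sum: "(A::real^'n::finite^'m::finite) *v (\<Sum>x\<in>S. f x) = (\<Sum>x\<in>S. A *v f x)"
  by (induction S rule: infinite_finite_induct) (auto simp: matrix_vector_right_distrib)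

lemma inner_matrix_vector_mult: "((A::real^'n::finite^'m::finite) *v x) \<bullet> y = x \<bullet> (transpose A *v y)"
  by (metis dot_lmul_matrix vector_transpose_matrix)

lemma inner_matrix_vector_mult_right:
  "x \<bullet> ((A::real^'n::finite^'m::finite) *v y) = (transpose A *v x) \<bullet> y"
  by (metis inner_commute inner_matrix_vector_mult)

lemma isometry_inner:
  assumes "transpose (A::real^'n::finite^'m::finite) ** A = mat 1"
  shows "(A *v x) \<bullet> (A *v y) = x \<bullet> y"
  by (simp add: inner_matrix_vector_mult matrix_vector_mul_assoc assms)

lemma isometry_norm:
  assumes "transpose (A::real^'n::finite^'m::finite) ** A = mat 1"
  shows "norm (A *v x) = norm x"
  by (simp add: norm_eq_sqrt_inner isometry_inner[OF assms])

lemma power2_norm_add_le: "(norm (u + w))\<^sup>2 \<le> 2 * (norm u)\<^sup>2 + 2 * (norm (w::'a::real_normed_vector))\<^sup>2"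
proof -
  have "(norm (u + w))\<^sup>2 \<le> (norm u + norm w)\<^sup>2"
    by (intro power_mono norm_triangle_ineq) simp
  also have "\<dots> \<le> 2 * (norm u)\<^sup>2 + 2 * (norm w)\<^sup>2"
    using sum_squares_bound[of "norm u" "norm w"] by (simp add: power2_sum)
  finally show ?thesis .
qed

lemma matrix_inv_eq:
  fixes A B :: "real^'n::finite^'n"
  assumes AB: "A ** B = mat 1"
  shows "matrix_inv A = B"
proof -
  have BA: "B ** A = mat 1" using AB matrix_left_right_inverse by blast
  have inv: "matrix_inv A ** A = mat 1"
    unfolding matrix_inv_def
    by (rule someI2[where P = "\<lambda>A'. A ** A' = mat 1 \<and> A' ** A = mat 1" and a = B]) (use AB BA in auto)
  have "matrix_inv A = matrix_inv A ** (A ** B)" by (simp add: AB)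
  also have "\<dots> = B" by (simp only: matrix_mul_assoc inv matrix_mul_lid)
  finally show ?thesis .
qed

lemma orthonormal_span_expansion:
  fixes S :: "'a::euclidean_space set"
  assumes orth: "pairwise orthogonal S" and unit: "\<And>s. s \<in> S \<Longrightarrow> norm s = 1"
    and u: "u \<in> span S"
  shows "u = (\<Sum>s\<in>S. (s \<bullet> u) *\<^sub>R s)"
proof -
  define e where "e = u - (\<Sum>s\<in>S. (s \<bullet> u / (s \<bullet> s)) *\<^sub>R s)"
  have "e \<in> span S"
    unfolding e_def by (intro span_diff u span_sum span_scale span_base)
  then have "orthogonal e e"
    unfolding e_def by (rule Gram_Schmidt_step[OF orth])
  then have "u - (\<Sum>s\<in>S. (s \<bullet> u / (s \<bullet> s)) *\<^sub>R s) = 0"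
    by (simp add: orthogonal_def e_def[symmetric])
  then have "u = (\<Sum>s\<in>S. (s \<bullet> u / (s \<bullet> s)) *\<^sub>R s)"
    by (rule eq_iff_diff_eq_0[THEN iffD2])
  also have "\<dots> = (\<Sum>s\<in>S. (s \<bullet> u) *\<^sub>R s)"
    by (intro sum.cong refl) (simp add: unit dot_square_norm)
  finally show ?thesis .
qed

lemma inner_sum_orthonormal:
  fixes c :: "nat \<Rightarrow> 'a::real_inner"
  assumes "\<And>i j. i < m \<Longrightarrow> j < m \<Longrightarrow> c i \<bullet> c j = (if i = j then 1 else 0)" and "k < m"
  shows "c k \<bullet> (\<Sum>i<m. x i *\<^sub>R c i) = x k"
proof -
  have "c k \<bullet> (\<Sum>i<m. x i *\<^sub>R c i) = (\<Sum>i<m. if i = k then x i else 0)"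
    unfolding inner_sum_right by (intro sum.cong refl) (auto simp: assms)
  then show ?thesis using assms(2) by simp
qed

lemma norm_sum_orthonormal_sq:
  fixes c :: "nat \<Rightarrow> 'a::real_inner"
  assumes "\<And>i j. i < m \<Longrightarrow> j < m \<Longrightarrow> c i \<bullet> c j = (if i = j then 1 else 0)"
  shows "(norm (\<Sum>i<m. x i *\<^sub>R c i))\<^sup>2 = (\<Sum>i<m. (x i)\<^sup>2)"
  unfolding power2_norm_eq_inner inner_sum_left
  by (intro sum.cong refl) (simp add: inner_sum_orthonormal[OF assms] power2_eq_square)

lemma matrix_inv_sum_outer:
  fixes c :: "nat \<Rightarrow> real^'n::finite"
  assumes ortho: "\<And>i j. i < m \<Longrightarrow> j < m \<Longrightarrow> c i \<bullet> c j = (if i = j then 1 else 0)"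
    and expand: "\<And>z. z = (\<Sum>i<m. (c i \<bullet> z) *\<^sub>R c i)"
    and nonzero: "\<And>i. i < m \<Longrightarrow> n i \<noteq> 0"
  shows "matrix_inv (\<Sum>i<m. n i *\<^sub>R outer (c i) (c i))
       = (\<Sum>i<m. inverse (n i) *\<^sub>R outer (c i) (c i))"
proof (rule matrix_inv_eq, rule iffD2[OF matrix_eq], intro allI)
  fix z
  have "(\<Sum>i<m. n i *\<^sub>R outer (c i) (c i)) ** (\<Sum>i<m. inverse (n i) *\<^sub>R outer (c i) (c i)) *v z
      = (\<Sum>i<m. n i *\<^sub>R outer (c i) (c i)) *v (\<Sum>i<m. (inverse (n i) * (c i \<bullet> z)) *\<^sub>R c i)"
    by (simp add: matrix_vector_mul_assoc[symmetric] sum_matrix_vector_mult outer_mult_vec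
        scaleR_matrix_vector_assoc[symmetric])
  also have "\<dots> = (\<Sum>i<m. (c i \<bullet> z) *\<^sub>R c i)"
    unfolding sum_matrix_vector_mult scaleR_matrix_vector_assoc[symmetric] outer_mult_vec
    by (intro sum.cong refl) (simp add: inner_sum_orthonormal[OF ortho] nonzero)
  also have "\<dots> = z"
    by (rule expand[symmetric])
  finally show "(\<Sum>i<m. n i *\<^sub>R outer (c i) (c i)) ** (\<Sum>i<m. inverse (n i) *\<^sub>R outer (c i) (c i)) *v z
      = mat 1 *v z" by simp
qed

section \<open>The bias of the estimated subspace\<close>

lemma transpose_mult_vec_nth: "(transpose A *v v) $ k = column k A \<bullet> (v::real^'m::finite)"
  by (simp add: matrix_vector_mult_def transpose_def column_def inner_vec_def mult_ac)

lemma power2_norm_transpose_mult_vec: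
  "(norm (transpose A *v v))\<^sup>2 = (\<Sum>k\<in>UNIV. (column k A \<bullet> (v::real^'m::finite))\<^sup>2)"
  unfolding power2_norm_eq_inner inner_vec_def[of "transpose A *v v"]
  by (simp add: transpose_mult_vec_nth power2_eq_square)

lemma norm_column_isometry:
  assumes "transpose (A::real^'n::finite^'m::finite) ** A = mat 1"
  shows "norm (column j A) = 1"
  by (metis assms isometry_norm matrix_vector_mult_basis norm_axis_1)

lemma sum_power2_norm_transpose_columns:
  fixes A :: "real^'n::finite^'m::finite" and C :: "real^'k::finite^'m"
  shows "(\<Sum>j\<in>UNIV. (norm (transpose A *v column j C))\<^sup>2)
       = (\<Sum>i\<in>UNIV. (norm (transpose C *v column i A))\<^sup>2)"
  unfolding power2_norm_transpose_mult_vec by (subst sum.swap) (simp add: inner_commute)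

lemma power2_norm_residual:
  assumes isometry: "transpose (A::real^'n::finite^'m::finite) ** A = mat 1"
  shows "(norm (v - A *v (transpose A *v v)))\<^sup>2 = (norm v)\<^sup>2 - (norm (transpose A *v v))\<^sup>2"
proof -
  have "(A *v (transpose A *v v)) \<bullet> v = (transpose A *v v) \<bullet> (transpose A *v v)"
    by (rule inner_matrix_vector_mult)
  moreover have "(A *v (transpose A *v v)) \<bullet> (A *v (transpose A *v v))
      = (transpose A *v v) \<bullet> (transpose A *v v)"
    by (rule isometry_inner[OF isometry])
  ultimately show ?thesis
    by (simp add: power2_norm_eq_inner inner_diff_left inner_diff_right inner_commute)
qed

lemma power2_norm_sum_coordinates_le:
  fixes x :: "real^'n::finite"
  shows "(norm (\<Sum>j\<in>UNIV. (x $ j) *\<^sub>R w j))\<^sup>2 \<le> (norm x)\<^sup>2 * (\<Sum>j\<in>UNIV. (norm (w j))\<^sup>2)"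
proof -
  have "(norm (\<Sum>j\<in>UNIV. (x $ j) *\<^sub>R w j))\<^sup>2 \<le> (\<Sum>j\<in>UNIV. \<bar>x $ j\<bar> * norm (w j))\<^sup>2"
    by (intro power_mono order_trans[OF norm_sum]) auto
  also have "\<dots> \<le> (\<Sum>j\<in>UNIV. \<bar>x $ j\<bar>\<^sup>2) * (\<Sum>j\<in>UNIV. (norm (w j))\<^sup>2)"
    by (rule Cauchy_Schwarz_ineq_sum)
  also have "\<dots> = (norm x)\<^sup>2 * (\<Sum>j\<in>UNIV. (norm (w j))\<^sup>2)"
    unfolding power2_norm_eq_inner by (simp add: inner_vec_def power2_eq_square)
  finally show ?thesis .
qed

lemma power2_norm_eq_range_plus_complement:
  fixes B :: "real^'r::finite^'d::finite"
  assumes B: "transpose B ** B = mat 1"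
    and P: "pairwise orthogonal P" "\<And>p. p \<in> P \<Longrightarrow> norm p = 1"
      "span P = {v. transpose B *v v = 0}"
  shows "(norm v)\<^sup>2 = (norm (transpose B *v v))\<^sup>2 + (\<Sum>p\<in>P. (p \<bullet> v)\<^sup>2)"
proof -
  define u where "u = v - B *v (transpose B *v v)"
  have "transpose B *v (B *v x) = x" for x
    by (simp add: matrix_vector_mul_assoc B)
  then have Bu: "transpose B *v u = 0"
    by (simp add: u_def matrix_vector_mult_diff_distrib)
  have pu: "p \<bullet> u = p \<bullet> v" if "p \<in> P" for p
  proof -
    have "transpose B *v p = 0" using P(3) span_base[OF that] by blast
    then show ?thesis by (simp add: u_def inner_diff_right inner_matrix_vector_mult_right)
  qed
  have "u \<in> span P" using P(3) Bu by simp
  with P(1,2) have "u = (\<Sum>p\<in>P. (p \<bullet> u) *\<^sub>R p)"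
    by (rule orthonormal_span_expansion)
  then have "u \<bullet> u = u \<bullet> (\<Sum>p\<in>P. (p \<bullet> u) *\<^sub>R p)"
    by (rule arg_cong)
  also have "\<dots> = (\<Sum>p\<in>P. (p \<bullet> v)\<^sup>2)"
    by (simp add: inner_sum_right pu inner_commute power2_eq_square)
  finally have "(norm u)\<^sup>2 = (\<Sum>p\<in>P. (p \<bullet> v)\<^sup>2)"
    by (simp add: power2_norm_eq_inner)
  moreover have "orthogonal (B *v (transpose B *v v)) u"
    by (simp add: orthogonal_def inner_matrix_vector_mult Bu)
  then have "(norm v)\<^sup>2 = (norm (B *v (transpose B *v v)))\<^sup>2 + (norm u)\<^sup>2"
    by (metis norm_add_Pythagorean u_def add.commute diff_add_cancel)
  ultimately show ?thesis by (simp add: isometry_norm[OF B])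
qed

lemma power2_norm_projection_residual_le:
  fixes B Bh :: "real^'r::finite^'d::finite"
  assumes B: "transpose B ** B = mat 1" and Bh: "transpose Bh ** Bh = mat 1"
    and P: "pairwise orthogonal P" "\<And>p. p \<in> P \<Longrightarrow> norm p = 1"
      "span P = {v. transpose B *v v = 0}"
    and eps: "sqrt (\<Sum>p\<in>P. (norm (transpose Bh *v p))\<^sup>2) \<le> \<epsilon>"
  shows "(norm (B *v \<alpha> - Bh *v (transpose Bh *v (B *v \<alpha>))))\<^sup>2 \<le> (norm (B *v \<alpha>))\<^sup>2 * \<epsilon>\<^sup>2"
proof -
  define w where "w j = column j B - Bh *v (transpose Bh *v column j B)" for j
  \<comment> \<open>\<open>|(I - Bh Bh\<^sup>T) B|\<^sub>F\<^sup>2 = r - |Bh\<^sup>T B|\<^sub>F\<^sup>2 = |Bh\<^sup>T B\<^sub>\<bottom>|\<^sub>F\<^sup>2\<close>\<close>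
  have "(\<Sum>j\<in>UNIV. (norm (w j))\<^sup>2) = (\<Sum>j\<in>UNIV. 1 - (norm (transpose Bh *v column j B))\<^sup>2)"
    by (simp add: w_def power2_norm_residual[OF Bh] norm_column_isometry[OF B])
  also have "\<dots> = (\<Sum>k\<in>UNIV. 1 - (norm (transpose B *v column k Bh))\<^sup>2)"
    by (simp only: sum_subtractf sum_power2_norm_transpose_columns[of Bh B])
  also have "\<dots> = (\<Sum>k\<in>UNIV. \<Sum>p\<in>P. (p \<bullet> column k Bh)\<^sup>2)"
  proof (intro sum.cong refl)
    fix k
    have "(norm (column k Bh))\<^sup>2 = (norm (transpose B *v column k Bh))\<^sup>2 + (\<Sum>p\<in>P. (p \<bullet> column k Bh)\<^sup>2)"
      by (rule power2_norm_eq_range_plus_complement[OF B P])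
    then show "1 - (norm (transpose B *v column k Bh))\<^sup>2 = (\<Sum>p\<in>P. (p \<bullet> column k Bh)\<^sup>2)"
      using norm_column_isometry[OF Bh, of k] by simp
  qed
  also have "\<dots> = (\<Sum>p\<in>P. (norm (transpose Bh *v p))\<^sup>2)"
    by (simp add: power2_norm_transpose_mult_vec inner_commute sum.swap[of _ P])
  also have "\<dots> \<le> \<epsilon>\<^sup>2"
    using eps by (metis power_mono real_sqrt_ge_zero real_sqrt_pow2 sum_nonneg zero_le_power2)
  finally have frobenius: "(\<Sum>j\<in>UNIV. (norm (w j))\<^sup>2) \<le> \<epsilon>\<^sup>2" .
  have "B *v \<alpha> - Bh *v (transpose Bh *v (B *v \<alpha>)) = (\<Sum>j\<in>UNIV. (\<alpha> $ j) *\<^sub>R w j)"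
    by (simp add: matrix_mult_sum[of B \<alpha>] scalar_mult_eq_scaleR matrix_vector_mult_sum
        matrix_vector_mult_scaleR w_def scaleR_diff_right sum_subtractf)
  then have "(norm (B *v \<alpha> - Bh *v (transpose Bh *v (B *v \<alpha>))))\<^sup>2
      \<le> (norm \<alpha>)\<^sup>2 * (\<Sum>j\<in>UNIV. (norm (w j))\<^sup>2)"
    by (simp add: power2_norm_sum_coordinates_le)
  also have "\<dots> \<le> (norm (B *v \<alpha>))\<^sup>2 * \<epsilon>\<^sup>2"
    using frobenius by (simp add: isometry_norm[OF B] mult_left_mono)
  finally show ?thesis .
qed

section \<open>The exploration schedule\<close>

definition explore_rounds :: "nat \<Rightarrow> nat \<Rightarrow> nat \<Rightarrow> nat set" where
  "explore_rounds r N2 i = {t \<in> {1..N2}. (t - 1) mod r = i}"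

lemma finite_explore_rounds [simp]: "finite (explore_rounds r N2 i)"
  by (simp add: explore_rounds_def)

lemma sum_explore_rounds:
  assumes "0 < r"
  shows "(\<Sum>t\<in>{1..N2}. f ((t - 1) mod r) t) = (\<Sum>i<r. \<Sum>t\<in>explore_rounds r N2 i. f i t)"
proof -
  have "(\<Sum>t\<in>{1..N2}. f ((t - 1) mod r) t)
      = (\<Sum>i<r. \<Sum>t\<in>explore_rounds r N2 i. f ((t - 1) mod r) t)"
    unfolding explore_rounds_def by (rule sum.group[symmetric]) (auto simp: assms)
  also have "\<dots> = (\<Sum>i<r. \<Sum>t\<in>explore_rounds r N2 i. f i t)"
    by (intro sum.cong refl) (simp add: explore_rounds_def)
  finally show ?thesis .
qed

lemma card_explore_rounds_ge:
  assumes "0 < r" "i < r"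
  shows "N2 div r \<le> card (explore_rounds r N2 i)"
proof -
  have inj: "inj_on (\<lambda>k. k * r + i + 1) {..<N2 div r}" by (auto simp: inj_on_def)
  have "(\<lambda>k. k * r + i + 1) ` {..<N2 div r} \<subseteq> explore_rounds r N2 i"
  proof
    fix t assume "t \<in> (\<lambda>k. k * r + i + 1) ` {..<N2 div r}"
    then obtain k where k: "k < N2 div r" "t = k * r + i + 1" by auto
    have "Suc k * r \<le> (N2 div r) * r" using k(1) by (intro mult_right_mono) auto
    also have "\<dots> \<le> N2" by simp
    finally show "t \<in> explore_rounds r N2 i" using k assms by (auto simp: explore_rounds_def)
  qed
  then have "card ((\<lambda>k. k * r + i + 1) ` {..<N2 div r}) \<le> card (explore_rounds r N2 i)"
    by (intro card_mono) auto
  then show ?thesis using card_image[OF inj] by simp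
qed

lemma rt_N2_ge: "real r * sqrt (real N) \<le> real (rt_N2 r N)"
  unfolding rt_N2_def by linarith

lemma rt_N2_le:
  assumes "1 \<le> real r * sqrt (real N)"
  shows "real (rt_N2 r N) \<le> 2 * real r * sqrt (real N)"
proof -
  have "real (rt_N2 r N) = real_of_int \<lceil>real r * sqrt (real N)\<rceil>"
    unfolding rt_N2_def by simp
  then have "real (rt_N2 r N) \<le> real r * sqrt (real N) + 1"
    using of_int_ceiling_le_add_one[of "real r * sqrt (real N)"] by linarith
  then show ?thesis using assms by linarith
qed

lemma sqrt_le_twice_card_explore_rounds:
  assumes "0 < r" "i < r" "4 \<le> N"
  shows "sqrt (real N) \<le> 2 * real (card (explore_rounds r (rt_N2 r N) i))"
proof -
  define N2 where "N2 = rt_N2 r N"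
  have "2 \<le> sqrt (real N)" using assms(3) real_sqrt_le_mono[of 4 "real N"] by simp
  have "N2 < (N2 div r) * r + r" using assms(1)
    by (metis add_less_cancel_left div_mult_mod_eq mod_less_divisor)
  then have "real N2 < (real (N2 div r) + 1) * real r"
    by (simp add: algebra_simps flip: of_nat_mult of_nat_add)
  then have "real N2 / real r < real (N2 div r) + 1"
    using assms(1) by (simp add: divide_less_eq)
  moreover have "sqrt (real N) \<le> real N2 / real r"
    using rt_N2_ge[of r N] assms(1) by (simp add: N2_def le_divide_eq mult.commute)
  moreover have "real (N2 div r) \<le> real (card (explore_rounds r N2 i))"
    using card_explore_rounds_ge[OF assms(1,2)] by simp
  ultimately show ?thesis using \<open>2 \<le> sqrt (real N)\<close> by (simp add: N2_def)
qed

lemma explore_rounds_nonempty: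
  assumes "0 < r" "i < r" "4 \<le> N"
  shows "explore_rounds r (rt_N2 r N) i \<noteq> {}"
proof
  assume "explore_rounds r (rt_N2 r N) i = {}"
  with sqrt_le_twice_card_explore_rounds[OF assms] have "sqrt (real N) \<le> 0" by simp
  with assms(3) show False by simp
qed

lemma rt_regret_bound_le_rate:
  fixes x b z :: real
  assumes x: "0 < \<phi>min" "\<phi>min \<le> x" "x \<le> \<phi>max"
    and b: "b \<le> x\<^sup>2 * \<epsilon>\<^sup>2" and z: "z \<le> r * (48 / sqrt N)"
    and "0 < r" "4 \<le> N"
  shows "2 * x * rt_N2 r N + 4 * real N / x * (b + z)
       \<le> (4 * \<phi>max + 192 / \<phi>min) * (r * sqrt N + N * \<epsilon>\<^sup>2)"
proof -
  have "2 \<le> sqrt N" using \<open>4 \<le> N\<close> real_sqrt_le_mono[of 4 "real N"] by simp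
  then have "1 \<le> real r * sqrt N"
    using \<open>0 < r\<close> \<open>4 \<le> N\<close> mult_mono[of 1 "real r" 1 "sqrt N"] by auto
  then have "real (rt_N2 r N) \<le> 2 * real r * sqrt N" by (rule rt_N2_le)
  then have "2 * x * rt_N2 r N \<le> 2 * \<phi>max * (2 * real r * sqrt N)"
    using x by (intro mult_mono) auto
  moreover have "4 * real N / x * b \<le> 4 * \<phi>max * (N * \<epsilon>\<^sup>2)"
  proof -
    have "4 * real N / x * b \<le> 4 * real N / x * (x\<^sup>2 * \<epsilon>\<^sup>2)"
      using b x by (intro mult_left_mono) auto
    also have "\<dots> = 4 * x * (N * \<epsilon>\<^sup>2)"
      using x by (simp add: power2_eq_square)
    also have "\<dots> \<le> 4 * \<phi>max * (N * \<epsilon>\<^sup>2)" using x by (intro mult_right_mono) auto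
    finally show ?thesis .
  qed
  moreover have "4 * real N / x * z \<le> 192 / \<phi>min * (r * sqrt N)"
  proof -
    have "4 * real N / x * z \<le> 4 * real N / x * (r * (48 / sqrt N))"
      using z x by (intro mult_left_mono) auto
    also have "\<dots> = 192 / x * (r * (N / sqrt N))" by simp
    also have "\<dots> = 192 / x * (r * sqrt N)" by (simp add: real_div_sqrt)
    also have "\<dots> \<le> 192 / \<phi>min * (r * sqrt N)"
      using x by (intro mult_right_mono divide_left_mono) (auto intro!: mult_pos_pos)
    finally show ?thesis .
  qed
  moreover have "0 \<le> 192 / \<phi>min * (N * \<epsilon>\<^sup>2)" using x by simp
  ultimately show ?thesis by (simp add: algebra_simps add_divide_distrib)
qed

lemma rt_theta_hat_grouped:
  fixes Bh :: "real^'r::finite^'d::finite"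
  shows "rt_theta_hat Bh a N2 y = Bh *v (matrix_inv
      (\<Sum>i<CARD('r). real (card (explore_rounds CARD('r) N2 i)) *\<^sub>R
          outer (transpose Bh *v a i) (transpose Bh *v a i))
      *v (\<Sum>i<CARD('r). (\<Sum>t\<in>explore_rounds CARD('r) N2 i. y t) *\<^sub>R (transpose Bh *v a i)))"
proof -
  have gram: "(\<Sum>t\<in>{1..N2}. outer (transpose Bh *v rt_explore CARD('r) a t)
                                 (transpose Bh *v rt_explore CARD('r) a t))
      = (\<Sum>i<CARD('r). real (card (explore_rounds CARD('r) N2 i)) *\<^sub>R
          outer (transpose Bh *v a i) (transpose Bh *v a i))"
    using sum_explore_rounds[of "CARD('r)" "\<lambda>i t. outer (transpose Bh *v a i) (transpose Bh *v a i)" N2]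
    by (simp only: rt_explore_def zero_less_card_finite sum_constant_scaleR)
  have moment: "(\<Sum>t\<in>{1..N2}. y t *\<^sub>R (transpose Bh *v rt_explore CARD('r) a t))
      = (\<Sum>i<CARD('r). (\<Sum>t\<in>explore_rounds CARD('r) N2 i. y t) *\<^sub>R (transpose Bh *v a i))"
    using sum_explore_rounds[of "CARD('r)" "\<lambda>i t. y t *\<^sub>R (transpose Bh *v a i)" N2]
    by (simp only: rt_explore_def zero_less_card_finite scaleR_sum_left)
  show ?thesis
    unfolding rt_theta_hat_def Let_def gram moment ..
qed

definition mean_explore_noise :: "nat \<Rightarrow> nat \<Rightarrow> (nat \<Rightarrow> real) \<Rightarrow> nat \<Rightarrow> real" where
  "mean_explore_noise r N2 \<eta> i = (\<Sum>t\<in>explore_rounds r N2 i. \<eta> t) / card (explore_rounds r N2 i)"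

section \<open>Greedy actions on the unit ball\<close>

lemma abs_inner_diff_unit_le:
  fixes x y \<theta> :: "'a::real_inner"
  assumes "norm x \<le> 1" "norm y \<le> 1"
  shows "\<bar>(x - y) \<bullet> \<theta>\<bar> \<le> 2 * norm \<theta>"
proof -
  have "\<bar>(x - y) \<bullet> \<theta>\<bar> \<le> norm (x - y) * norm \<theta>" by (rule Cauchy_Schwarz_ineq2)
  also have "\<dots> \<le> 2 * norm \<theta>"
    using norm_triangle_ineq4[of x y] assms by (intro mult_right_mono) auto
  finally show ?thesis .
qed

lemma unit_ball_maximizer_eq_sgn:
  fixes v s :: "'a::real_inner"
  assumes "v \<noteq> 0" and s: "norm s \<le> 1" and max: "\<And>x. norm x \<le> 1 \<Longrightarrow> x \<bullet> v \<le> s \<bullet> v"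
  shows "s = sgn v"
proof -
  have unit: "norm (sgn v) = 1" using assms(1) by (simp add: norm_sgn)
  have "sgn v \<bullet> v = norm v"
    using assms(1) by (simp add: sgn_div_norm dot_square_norm power2_eq_square field_simps)
  then have "norm v \<le> s \<bullet> v" using max[of "sgn v"] unit by simp
  then have "1 \<le> s \<bullet> sgn v"
    using assms(1) by (simp add: sgn_div_norm divide_simps mult.commute)
  moreover have "(norm s)\<^sup>2 \<le> 1" using s by (simp add: power_le_one)
  moreover have "sgn v \<bullet> sgn v = 1" using unit by (simp add: dot_square_norm)
  ultimately have "(norm (s - sgn v))\<^sup>2 \<le> 0"
    by (simp add: power2_norm_eq_inner inner_diff_left inner_diff_right inner_commute)
  then show ?thesis by simp
qed

lemma unit_ball_greedy_regret_le:
  fixes \<theta> v x s :: "'a::real_inner"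
  assumes "\<theta> \<noteq> 0" and x: "norm x \<le> 1" and s: "norm s \<le> 1"
    and greedy: "\<And>y. norm y \<le> 1 \<Longrightarrow> y \<bullet> v \<le> s \<bullet> v"
  shows "(x - s) \<bullet> \<theta> \<le> 2 * (norm (v - \<theta>))\<^sup>2 / norm \<theta>"
proof -
  have n\<theta>: "0 < norm \<theta>" using assms(1) by simp
  have x_le: "x \<bullet> \<theta> \<le> norm \<theta>"
    using norm_cauchy_schwarz[of x \<theta>] mult_right_mono[OF x norm_ge_zero[of \<theta>]] by simp
  show ?thesis
  proof (cases "v = 0")
    case True
    have "(x - s) \<bullet> \<theta> \<le> 2 * norm \<theta>"
      using abs_inner_diff_unit_le[OF x s, of \<theta>] by linarith
    then show ?thesis using True n\<theta> by (simp add: power2_eq_square)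
  next
    case False
    define u where "u = sgn v"
    have su: "s = u" unfolding u_def by (rule unit_ball_maximizer_eq_sgn[OF False s greedy])
    have nu: "norm u = 1" using False by (simp add: u_def norm_sgn)
    have gap: "(norm (\<theta> - norm \<theta> *\<^sub>R u))\<^sup>2 = 2 * norm \<theta> * (norm \<theta> - u \<bullet> \<theta>)"
    proof -
      have "(\<theta> - norm \<theta> *\<^sub>R u) \<bullet> (\<theta> - norm \<theta> *\<^sub>R u)
          = \<theta> \<bullet> \<theta> - 2 * norm \<theta> * (u \<bullet> \<theta>) + norm \<theta> * norm \<theta> * (u \<bullet> u)"
        by (simp add: inner_diff_left inner_diff_right inner_commute[of \<theta> u] algebra_simps)
      moreover have "u \<bullet> u = 1" "\<theta> \<bullet> \<theta> = norm \<theta> * norm \<theta>"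
        using nu by (simp_all add: dot_square_norm power2_eq_square)
      ultimately show ?thesis by (simp add: power2_norm_eq_inner algebra_simps)
    qed
    have "v = norm v *\<^sub>R u" using False by (simp add: u_def sgn_div_norm)
    then have "norm (v - norm \<theta> *\<^sub>R u) = \<bar>norm v - norm \<theta>\<bar>"
      using nu by (metis norm_scaleR scaleR_diff_left mult_cancel_left1 real_norm_def)
    also have "\<dots> \<le> norm (v - \<theta>)" by (rule norm_triangle_ineq3)
    finally have "norm (\<theta> - norm \<theta> *\<^sub>R u) \<le> 2 * norm (v - \<theta>)"
      using norm_triangle_ineq[of "\<theta> - v" "v - norm \<theta> *\<^sub>R u"] by (simp add: norm_minus_commute)
    then have "(norm (\<theta> - norm \<theta> *\<^sub>R u))\<^sup>2 \<le> 4 * (norm (v - \<theta>))\<^sup>2"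
      using power_mono[of _ _ 2] by (fastforce simp: power_mult_distrib)
    then have "norm \<theta> - u \<bullet> \<theta> \<le> 2 * (norm (v - \<theta>))\<^sup>2 / norm \<theta>"
      using gap n\<theta> by (simp add: field_simps)
    then show ?thesis using x_le su by (simp add: inner_diff_left)
  qed
qed

section \<open>Averages of independent sub-Gaussian noise\<close>

lemma power2_le_exp_plus_exp_minus: "(x::real)\<^sup>2 \<le> 4 * (exp x + exp (- x))"
proof -
  have "\<bar>x\<bar> / 2 \<le> exp (\<bar>x\<bar> / 2)" using exp_ge_add_one_self[of "\<bar>x\<bar> / 2"] by linarith
  then have "(\<bar>x\<bar> / 2)\<^sup>2 \<le> (exp (\<bar>x\<bar> / 2))\<^sup>2" by (rule power_mono) simp
  also have "(exp (\<bar>x\<bar> / 2))\<^sup>2 = exp \<bar>x\<bar>" by (simp add: power2_eq_square flip: exp_add)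
  also have "exp \<bar>x\<bar> \<le> exp x + exp (- x)" by (cases "0 \<le> x") auto
  finally show ?thesis by (simp add: power_divide)
qed

text \<open>Any constant bound suffices; 24 comes from \<open>x\<^sup>2 \<le> 4 (e\<^sup>x + e\<^sup>-\<^sup>x)\<close> and
  \<open>E e\<^sup>\<plusminus>\<^sup>X \<le> e\<^sup>1\<^sup>/\<^sup>2 \<le> 3\<close>.\<close>

lemma (in prob_space) subgaussian1_second_moment:
  assumes subg: "subgaussian1 M X" and X: "X \<in> borel_measurable M"
  shows "integrable M (\<lambda>\<omega>. (X \<omega>)\<^sup>2)" "(\<integral>\<omega>. (X \<omega>)\<^sup>2 \<partial>M) \<le> 24"
proof -
  have mgf: "integrable M (\<lambda>\<omega>. exp (l * X \<omega>))" "(\<integral>\<omega>. exp (l * X \<omega>) \<partial>M) \<le> exp (l\<^sup>2 / 2)" for l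
    using subg unfolding subgaussian1_def by auto
  define g where "g \<omega> = 4 * (exp (X \<omega>) + exp (- X \<omega>))" for \<omega>
  have g: "integrable M g"
    unfolding g_def using mgf(1)[of 1] mgf(1)[of "-1"] by simp
  have bound: "(X \<omega>)\<^sup>2 \<le> g \<omega>" for \<omega> unfolding g_def by (rule power2_le_exp_plus_exp_minus)
  show sq: "integrable M (\<lambda>\<omega>. (X \<omega>)\<^sup>2)"
    by (rule Bochner_Integration.integrable_bound[OF g]) (use X bound in \<open>auto simp: g_def\<close>)
  have "(\<integral>\<omega>. (X \<omega>)\<^sup>2 \<partial>M) \<le> integral\<^sup>L M g" by (intro integral_mono sq g bound)
  also have "\<dots> \<le> 4 * (exp (1/2) + exp (1/2))"
    unfolding g_def using mgf[of 1] mgf[of "-1"] by simp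
  also have "\<dots> \<le> 24"
    using exp_le order_trans[OF exp_le_cancel_iff[THEN iffD2, of "1/2" 1]] by simp
  finally show "(\<integral>\<omega>. (X \<omega>)\<^sup>2 \<partial>M) \<le> 24" .
qed

lemma (in prob_space) indep_vars_indep_var:
  assumes indep: "indep_vars M' X I" and "s \<in> I" "t \<in> I" "s \<noteq> t"
  shows "indep_var (M' s) (X s) (M' t) (X t)"
proof -
  have "indep_var (PiM {s} M') (\<lambda>\<omega>. restrict (\<lambda>i. X i \<omega>) {s})
                  (PiM {t} M') (\<lambda>\<omega>. restrict (\<lambda>i. X i \<omega>) {t})"
    using assms by (intro indep_var_restrict[OF indep]) auto
  from indep_var_compose[OF this measurable_component_singleton[of s "{s}" M']
      measurable_component_singleton[of t "{t}" M']]
  show ?thesis by (simp add: comp_def)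
qed

lemma (in prob_space) integral_sum_indep_sq:
  fixes X :: "'i \<Rightarrow> 'a \<Rightarrow> real"
  assumes indep: "indep_vars (\<lambda>_. borel) X I" and T: "finite T" "T \<subseteq> I"
    and int: "\<And>t. t \<in> T \<Longrightarrow> integrable M (X t)"
    and sq: "\<And>t. t \<in> T \<Longrightarrow> integrable M (\<lambda>\<omega>. (X t \<omega>)\<^sup>2)"
    and centered: "\<And>t. t \<in> T \<Longrightarrow> expectation (X t) = 0"
  shows "integrable M (\<lambda>\<omega>. (\<Sum>t\<in>T. X t \<omega>)\<^sup>2)"
    and "(\<integral>\<omega>. (\<Sum>t\<in>T. X t \<omega>)\<^sup>2 \<partial>M) = (\<Sum>t\<in>T. \<integral>\<omega>. (X t \<omega>)\<^sup>2 \<partial>M)"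
proof -
  have cross: "integrable M (\<lambda>\<omega>. X s \<omega> * X t \<omega>) \<and>
      (\<integral>\<omega>. X s \<omega> * X t \<omega> \<partial>M) = (if s = t then \<integral>\<omega>. (X t \<omega>)\<^sup>2 \<partial>M else 0)"
    if "s \<in> T" "t \<in> T" for s t
  proof (cases "s = t")
    case True
    then show ?thesis using sq[OF that(2)] by (simp add: power2_eq_square)
  next
    case False
    have "indep_var borel (X s) borel (X t)"
      using indep_vars_indep_var[OF indep] that T(2) False by blast
    from indep_var_integrable[OF this int int] indep_var_lebesgue_integral[OF this int int]
    show ?thesis using centered that False by simp
  qed
  have expand: "(\<Sum>t\<in>T. X t \<omega>)\<^sup>2 = (\<Sum>s\<in>T. \<Sum>t\<in>T. X s \<omega> * X t \<omega>)" for \<omega>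
    by (simp add: power2_eq_square sum_product)
  show "integrable M (\<lambda>\<omega>. (\<Sum>t\<in>T. X t \<omega>)\<^sup>2)"
    unfolding expand using cross by auto
  show "(\<integral>\<omega>. (\<Sum>t\<in>T. X t \<omega>)\<^sup>2 \<partial>M) = (\<Sum>t\<in>T. \<integral>\<omega>. (X t \<omega>)\<^sup>2 \<partial>M)"
    unfolding expand using cross T(1) by (simp add: integral_sum)
qed

lemma (in prob_space) integral_mean_explore_noise_sq_le:
  assumes indep: "indep_vars (\<lambda>_. borel) \<eta> UNIV"
    and noise: "\<And>t. integrable M (\<eta> t)" "\<And>t. expectation (\<eta> t) = 0" "\<And>t. subgaussian1 M (\<eta> t)"
    and rounds: "explore_rounds r N2 i \<noteq> {}"
  shows "integrable M (\<lambda>\<omega>. (mean_explore_noise r N2 (\<lambda>t. \<eta> t \<omega>) i)\<^sup>2)"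
    and "(\<integral>\<omega>. (mean_explore_noise r N2 (\<lambda>t. \<eta> t \<omega>) i)\<^sup>2 \<partial>M) \<le> 24 / card (explore_rounds r N2 i)"
proof -
  let ?T = "explore_rounds r N2 i"
  have n: "0 < real (card ?T)" using rounds by (simp add: card_gt_0_iff)
  have meas: "\<eta> t \<in> borel_measurable M" for t using indep by (simp add: indep_vars_def)
  note moments = subgaussian1_second_moment[OF noise(3) meas]
  note sum_sq = integral_sum_indep_sq[OF indep finite_explore_rounds subset_UNIV noise(1) moments(1) noise(2)]
  have mean_sq: "(mean_explore_noise r N2 (\<lambda>t. \<eta> t \<omega>) i)\<^sup>2 = (\<Sum>t\<in>?T. \<eta> t \<omega>)\<^sup>2 / (card ?T)\<^sup>2" for \<omega>
    by (simp add: mean_explore_noise_def power_divide)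
  show "integrable M (\<lambda>\<omega>. (mean_explore_noise r N2 (\<lambda>t. \<eta> t \<omega>) i)\<^sup>2)"
    unfolding mean_sq using sum_sq(1) by simp
  have "(\<integral>\<omega>. (mean_explore_noise r N2 (\<lambda>t. \<eta> t \<omega>) i)\<^sup>2 \<partial>M)
      = (\<Sum>t\<in>?T. \<integral>\<omega>. (\<eta> t \<omega>)\<^sup>2 \<partial>M) / (card ?T)\<^sup>2"
    unfolding mean_sq sum_sq(2)[symmetric] by simp
  also have "\<dots> \<le> (24 * card ?T) / (card ?T)\<^sup>2"
    using sum_mono[of ?T "\<lambda>t. \<integral>\<omega>. (\<eta> t \<omega>)\<^sup>2 \<partial>M" "\<lambda>_. 24", OF moments(2)]
    by (intro divide_right_mono) auto
  also have "\<dots> = 24 / card ?T" using n by (simp add: power2_eq_square)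
  finally show "(\<integral>\<omega>. (mean_explore_noise r N2 (\<lambda>t. \<eta> t \<omega>) i)\<^sup>2 \<partial>M) \<le> 24 / card ?T" .
qed

lemma (in prob_space) integral_sum_mean_explore_noise_sq_le:
  assumes indep: "indep_vars (\<lambda>_. borel) \<eta> UNIV"
    and noise: "\<And>t. integrable M (\<eta> t)" "\<And>t. expectation (\<eta> t) = 0" "\<And>t. subgaussian1 M (\<eta> t)"
    and r: "0 < r" and N: "4 \<le> N"
  shows "integrable M (\<lambda>\<omega>. \<Sum>i<r. (mean_explore_noise r (rt_N2 r N) (\<lambda>t. \<eta> t \<omega>) i)\<^sup>2)"
    and "(\<integral>\<omega>. (\<Sum>i<r. (mean_explore_noise r (rt_N2 r N) (\<lambda>t. \<eta> t \<omega>) i)\<^sup>2) \<partial>M)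
           \<le> r * (48 / sqrt N)"
proof -
  let ?T = "explore_rounds r (rt_N2 r N)"
  have "2 \<le> sqrt N" using N real_sqrt_le_mono[of 4 "real N"] by simp
  have each: "integrable M (\<lambda>\<omega>. (mean_explore_noise r (rt_N2 r N) (\<lambda>t. \<eta> t \<omega>) i)\<^sup>2)
      \<and> (\<integral>\<omega>. (mean_explore_noise r (rt_N2 r N) (\<lambda>t. \<eta> t \<omega>) i)\<^sup>2 \<partial>M) \<le> 48 / sqrt N"
    if "i < r" for i
  proof -
    have "?T i \<noteq> {}" by (rule explore_rounds_nonempty[OF r that N])
    note integral_mean_explore_noise_sq_le[OF indep noise this]
    moreover have "24 / card (?T i) \<le> 24 / (sqrt N / 2)"
      using sqrt_le_twice_card_explore_rounds[OF r that N] \<open>2 \<le> sqrt N\<close> \<open>?T i \<noteq> {}\<close>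
      by (intro divide_left_mono) (auto intro!: mult_pos_pos simp: card_gt_0_iff)
    ultimately show ?thesis by auto
  qed
  then show "integrable M (\<lambda>\<omega>. \<Sum>i<r. (mean_explore_noise r (rt_N2 r N) (\<lambda>t. \<eta> t \<omega>) i)\<^sup>2)"
    by auto
  have "(\<integral>\<omega>. (\<Sum>i<r. (mean_explore_noise r (rt_N2 r N) (\<lambda>t. \<eta> t \<omega>) i)\<^sup>2) \<partial>M)
      = (\<Sum>i<r. \<integral>\<omega>. (mean_explore_noise r (rt_N2 r N) (\<lambda>t. \<eta> t \<omega>) i)\<^sup>2 \<partial>M)"
    using each by (simp add: integral_sum)
  also have "\<dots> \<le> (\<Sum>i<r. 48 / sqrt N)" using each by (intro sum_mono) auto
  finally show "(\<integral>\<omega>. (\<Sum>i<r. (mean_explore_noise r (rt_N2 r N) (\<lambda>t. \<eta> t \<omega>) i)\<^sup>2) \<partial>M)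
      \<le> r * (48 / sqrt N)" by simp
qed

section \<open>The representation-transfer algorithm\<close>

locale exploration_basis =
  fixes Bh :: "real^'r::finite^'d::finite" and a :: "nat \<Rightarrow> real^'d"
  assumes isometry: "transpose Bh ** Bh = mat 1"
    and orthonormal:
      "\<And>i j. i < CARD('r) \<Longrightarrow> j < CARD('r) \<Longrightarrow> a i \<bullet> a j = (if i = j then 1 else 0)"
    and span_eq_range: "span (a ` {..<CARD('r)}) = range ((*v) Bh)"
begin

lemma norm_basis: "i < CARD('r) \<Longrightarrow> norm (a i) = 1"
  using orthonormal[of i i] by (simp add: norm_eq_sqrt_inner)

lemma projection_fixes_basis:
  assumes "i < CARD('r)"
  shows "Bh *v (transpose Bh *v a i) = a i"
proof -
  have "a i \<in> range ((*v) Bh)"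
    using assms span_eq_range span_base[of "a i" "a ` {..<CARD('r)}"] by auto
  then obtain w where "a i = Bh *v w" by auto
  then show ?thesis by (simp add: matrix_vector_mul_assoc isometry)
qed

lemma projection_expansion: "Bh *v (transpose Bh *v v) = (\<Sum>i<CARD('r). (a i \<bullet> v) *\<^sub>R a i)"
proof -
  let ?A = "a ` {..<CARD('r)}"
  have inj: "inj_on a {..<CARD('r)}"
    by (rule inj_onI) (metis orthonormal lessThan_iff zero_neq_one)
  have "pairwise orthogonal ?A"
    using orthonormal by (auto simp: pairwise_def orthogonal_def)
  moreover have "\<And>s. s \<in> ?A \<Longrightarrow> norm s = 1" using norm_basis by auto
  moreover have "Bh *v (transpose Bh *v v) \<in> span ?A" using span_eq_range by auto
  ultimately have "Bh *v (transpose Bh *v v)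
      = (\<Sum>i<CARD('r). (a i \<bullet> (Bh *v (transpose Bh *v v))) *\<^sub>R a i)"
    by (subst (1) orthonormal_span_expansion) (auto simp: sum.reindex[OF inj])
  also have "\<dots> = (\<Sum>i<CARD('r). (a i \<bullet> v) *\<^sub>R a i)"
    by (intro sum.cong refl)
      (simp add: inner_matrix_vector_mult_right projection_fixes_basis)
  finally show ?thesis .
qed

lemma coordinates_orthonormal:
  "i < CARD('r) \<Longrightarrow> j < CARD('r)
    \<Longrightarrow> (transpose Bh *v a i) \<bullet> (transpose Bh *v a j) = (if i = j then 1 else 0)"
  by (metis isometry_inner[OF isometry] projection_fixes_basis orthonormal)

lemma coordinates_expansion:
  "z = (\<Sum>i<CARD('r). ((transpose Bh *v a i) \<bullet> z) *\<^sub>R (transpose Bh *v a i))"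
proof -
  have "z = transpose Bh *v (Bh *v (transpose Bh *v (Bh *v z)))"
    by (simp add: matrix_vector_mul_assoc isometry)
  also have "\<dots> = transpose Bh *v (\<Sum>i<CARD('r). (a i \<bullet> (Bh *v z)) *\<^sub>R a i)"
    by (simp only: projection_expansion)
  also have "\<dots> = (\<Sum>i<CARD('r). ((transpose Bh *v a i) \<bullet> z) *\<^sub>R (transpose Bh *v a i))"
    by (simp add: matrix_vector_mult_sum matrix_vector_mult_scaleR inner_matrix_vector_mult_right)
  finally show ?thesis .
qed

lemma rt_theta_hat_eq_means:
  assumes rounds: "\<And>i. i < CARD('r) \<Longrightarrow> explore_rounds CARD('r) N2 i \<noteq> {}"
  shows "rt_theta_hat Bh a N2 y = (\<Sum>i<CARD('r).
     ((\<Sum>t\<in>explore_rounds CARD('r) N2 i. y t) / card (explore_rounds CARD('r) N2 i)) *\<^sub>R a i)"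
proof -
  define c where "c i = transpose Bh *v a i" for i
  define n where "n i = real (card (explore_rounds CARD('r) N2 i))" for i
  define Y where "Y i = (\<Sum>t\<in>explore_rounds CARD('r) N2 i. y t)" for i
  note c_orthonormal = coordinates_orthonormal[folded c_def]
  have n_nonzero: "n i \<noteq> 0" if "i < CARD('r)" for i
    using rounds[OF that] by (simp add: n_def)
  have "rt_theta_hat Bh a N2 y
      = Bh *v ((\<Sum>i<CARD('r). inverse (n i) *\<^sub>R outer (c i) (c i)) *v (\<Sum>i<CARD('r). Y i *\<^sub>R c i))"
    unfolding rt_theta_hat_grouped c_def[symmetric] n_def[symmetric] Y_def[symmetric]
    by (simp only: matrix_inv_sum_outer[OF c_orthonormal coordinates_expansion[folded c_def] n_nonzero])
  also have "\<dots> = Bh *v (\<Sum>i<CARD('r). inverse (n i) *\<^sub>R ((c i \<bullet> (\<Sum>j<CARD('r). Y j *\<^sub>R c j)) *\<^sub>R c i))"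
    by (simp only: sum_matrix_vector_mult scaleR_matrix_vector_assoc[symmetric] outer_mult_vec)
  also have "\<dots> = Bh *v (\<Sum>i<CARD('r). (Y i / n i) *\<^sub>R c i)"
    by (intro arg_cong[where f = "(*v) Bh"] sum.cong refl)
      (simp add: inner_sum_orthonormal[OF c_orthonormal] divide_inverse)
  also have "\<dots> = (\<Sum>i<CARD('r). (Y i / n i) *\<^sub>R a i)"
    by (simp add: matrix_vector_mult_sum matrix_vector_mult_scaleR c_def projection_fixes_basis)
  finally show ?thesis by (simp add: Y_def n_def)
qed

lemma rt_theta_hat_eq_projection_plus_noise:
  assumes rounds: "\<And>i. i < CARD('r) \<Longrightarrow> explore_rounds CARD('r) N2 i \<noteq> {}"
  shows "rt_theta_hat Bh a N2 (\<lambda>t. rt_explore CARD('r) a t \<bullet> \<theta> + \<eta> t)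
       = Bh *v (transpose Bh *v \<theta>) + (\<Sum>i<CARD('r). mean_explore_noise CARD('r) N2 \<eta> i *\<^sub>R a i)"
proof -
  have "(\<Sum>t\<in>explore_rounds CARD('r) N2 i. rt_explore CARD('r) a t \<bullet> \<theta> + \<eta> t)
        / card (explore_rounds CARD('r) N2 i)
      = a i \<bullet> \<theta> + mean_explore_noise CARD('r) N2 \<eta> i" if "i < CARD('r)" for i
  proof -
    have "(\<Sum>t\<in>explore_rounds CARD('r) N2 i. rt_explore CARD('r) a t \<bullet> \<theta>)
        = card (explore_rounds CARD('r) N2 i) * (a i \<bullet> \<theta>)"
      by (simp add: rt_explore_def explore_rounds_def)
    then show ?thesis
      using rounds[OF that] by (simp add: sum.distrib mean_explore_noise_def add_divide_distrib)
  qed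
  then show ?thesis
    by (simp add: rt_theta_hat_eq_means[OF rounds] projection_expansion scaleR_add_left sum.distrib)
qed

lemma rt_estimation_error_le:
  assumes rounds: "\<And>i. i < CARD('r) \<Longrightarrow> explore_rounds CARD('r) N2 i \<noteq> {}"
  shows "(norm (rt_theta_hat Bh a N2 (\<lambda>t. rt_explore CARD('r) a t \<bullet> \<theta> + \<eta> t) - \<theta>))\<^sup>2
       \<le> 2 * (norm (\<theta> - Bh *v (transpose Bh *v \<theta>)))\<^sup>2
         + 2 * (\<Sum>i<CARD('r). (mean_explore_noise CARD('r) N2 \<eta> i)\<^sup>2)"
proof -
  define w where "w = (\<Sum>i<CARD('r). mean_explore_noise CARD('r) N2 \<eta> i *\<^sub>R a i)"
  have error: "rt_theta_hat Bh a N2 (\<lambda>t. rt_explore CARD('r) a t \<bullet> \<theta> + \<eta> t) - \<theta>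
      = (Bh *v (transpose Bh *v \<theta>) - \<theta>) + w"
    by (simp add: rt_theta_hat_eq_projection_plus_noise[OF rounds] w_def)
  have noise: "(norm w)\<^sup>2 = (\<Sum>i<CARD('r). (mean_explore_noise CARD('r) N2 \<eta> i)\<^sup>2)"
    unfolding w_def by (rule norm_sum_orthonormal_sq[OF orthonormal])
  show ?thesis
    using power2_norm_add_le[of "Bh *v (transpose Bh *v \<theta>) - \<theta>" w]
    unfolding error noise by (simp only: norm_minus_commute[of "Bh *v (transpose Bh *v \<theta>)"])
qed

lemma norm_rt_action_le:
  assumes "\<And>v. norm (sel v) \<le> 1"
  shows "norm (rt_action Bh a sel \<theta> \<eta> N t) \<le> 1"
  by (simp add: rt_action_def Let_def rt_explore_def norm_basis assms)

lemma abs_rt_regret_le: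
  assumes "\<And>v. norm (sel v) \<le> 1" and "norm xstar \<le> 1"
  shows "\<bar>rt_regret Bh a sel \<theta> xstar \<eta> N\<bar> \<le> 2 * norm \<theta> * N"
proof -
  have "\<bar>rt_regret Bh a sel \<theta> xstar \<eta> N\<bar>
      \<le> (\<Sum>t\<in>{1..N}. \<bar>(xstar - rt_action Bh a sel \<theta> \<eta> N t) \<bullet> \<theta>\<bar>)"
    unfolding rt_regret_def by (rule sum_abs)
  also have "\<dots> \<le> (\<Sum>t\<in>{1..N}. 2 * norm \<theta>)"
    by (intro sum_mono abs_inner_diff_unit_le assms norm_rt_action_le)
  finally show ?thesis by (simp add: mult.commute)
qed

lemma rt_regret_le:
  assumes sel: "\<And>v. norm (sel v) \<le> 1" "\<And>v x. norm x \<le> 1 \<Longrightarrow> x \<bullet> v \<le> sel v \<bullet> v"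
    and xstar: "norm xstar \<le> 1" and "\<theta> \<noteq> 0"
    and rounds: "\<And>i. i < CARD('r) \<Longrightarrow> explore_rounds CARD('r) (rt_N2 CARD('r) N) i \<noteq> {}"
  shows "rt_regret Bh a sel \<theta> xstar \<eta> N
       \<le> 2 * norm \<theta> * rt_N2 CARD('r) N
         + 4 * real N / norm \<theta> * ((norm (\<theta> - Bh *v (transpose Bh *v \<theta>)))\<^sup>2
             + (\<Sum>i<CARD('r). (mean_explore_noise CARD('r) (rt_N2 CARD('r) N) \<eta> i)\<^sup>2))"
proof -
  define N2 where "N2 = rt_N2 CARD('r) N"
  define \<theta>h where "\<theta>h = rt_theta_hat Bh a N2 (\<lambda>t. rt_explore CARD('r) a t \<bullet> \<theta> + \<eta> t)"
  define E where "E = 2 * (norm (\<theta>h - \<theta>))\<^sup>2 / norm \<theta>"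
  have E: "0 \<le> E" by (simp add: E_def)
  have explore: "(xstar - rt_explore CARD('r) a t) \<bullet> \<theta> \<le> 2 * norm \<theta> + E" for t
  proof -
    have "norm (rt_explore CARD('r) a t) \<le> 1" by (simp add: rt_explore_def norm_basis)
    from abs_inner_diff_unit_le[OF xstar this, of \<theta>] E show ?thesis by linarith
  qed
  have exploit: "(xstar - sel \<theta>h) \<bullet> \<theta> \<le> E"
    unfolding E_def using \<open>\<theta> \<noteq> 0\<close> xstar sel by (rule unit_ball_greedy_regret_le)
  have "rt_regret Bh a sel \<theta> xstar \<eta> N \<le> (\<Sum>t\<in>{1..N}. (if t \<le> N2 then 2 * norm \<theta> else 0) + E)"
    unfolding rt_regret_def rt_action_def Let_def N2_def[symmetric] \<theta>h_def[symmetric]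
    by (intro sum_mono) (simp add: explore exploit)
  also have "\<dots> = 2 * norm \<theta> * card {t \<in> {1..N}. t \<le> N2} + N * E"
    by (simp add: sum.distrib sum.inter_filter[symmetric])
  also have "\<dots> \<le> 2 * norm \<theta> * N2 + N * E"
  proof -
    have "card {t \<in> {1..N}. t \<le> N2} \<le> card {1..N2}" by (rule card_mono) auto
    then show ?thesis by (intro add_right_mono mult_left_mono) auto
  qed
  also have "\<dots> \<le> 2 * norm \<theta> * N2 + 4 * real N / norm \<theta> * ((norm (\<theta> - Bh *v (transpose Bh *v \<theta>)))\<^sup>2
             + (\<Sum>i<CARD('r). (mean_explore_noise CARD('r) N2 \<eta> i)\<^sup>2))"
  proof -
    have "(norm (\<theta>h - \<theta>))\<^sup>2 \<le> 2 * (norm (\<theta> - Bh *v (transpose Bh *v \<theta>)))\<^sup>2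
        + 2 * (\<Sum>i<CARD('r). (mean_explore_noise CARD('r) N2 \<eta> i)\<^sup>2)"
      unfolding \<theta>h_def N2_def by (rule rt_estimation_error_le[OF rounds])
    then have "N * E \<le> 2 * real N * (2 * (norm (\<theta> - Bh *v (transpose Bh *v \<theta>)))\<^sup>2
        + 2 * (\<Sum>i<CARD('r). (mean_explore_noise CARD('r) N2 \<eta> i)\<^sup>2)) / norm \<theta>"
      unfolding E_def by (simp add: divide_right_mono mult_left_mono)
    then show ?thesis by (simp add: algebra_simps add_divide_distrib)
  qed
  finally show ?thesis by (simp add: N2_def)
qed

lemma rt_action_eq:
  assumes rounds: "\<And>i. i < CARD('r) \<Longrightarrow> explore_rounds CARD('r) (rt_N2 CARD('r) N) i \<noteq> {}"
  shows "rt_action Bh a sel \<theta> \<eta> N t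
       = (if t \<le> rt_N2 CARD('r) N then a ((t - 1) mod CARD('r))
          else sel (Bh *v (transpose Bh *v \<theta>)
                    + (\<Sum>i<CARD('r). mean_explore_noise CARD('r) (rt_N2 CARD('r) N) \<eta> i *\<^sub>R a i)))"
  using rt_theta_hat_eq_projection_plus_noise[OF rounds, of \<theta> \<eta>]
  by (simp add: rt_action_def Let_def rt_explore_def)

lemma borel_measurable_rt_regret:
  assumes sel: "\<And>v. norm (sel v) \<le> 1" "\<And>v x. norm x \<le> 1 \<Longrightarrow> x \<bullet> v \<le> sel v \<bullet> v"
    and rounds: "\<And>i. i < CARD('r) \<Longrightarrow> explore_rounds CARD('r) (rt_N2 CARD('r) N) i \<noteq> {}"
    and [measurable]: "\<And>t. \<eta> t \<in> borel_measurable M"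
  shows "(\<lambda>\<omega>. rt_regret Bh a sel \<theta> xstar (\<lambda>t. \<eta> t \<omega>) N) \<in> borel_measurable M"
proof -
  \<comment> \<open>\<open>sel\<close> is arbitrary, but away from 0 the argmax property pins it down to \<open>sgn\<close>.\<close>
  have sel_eq: "sel v = (if v = 0 then sel 0 else sgn v)" for v
    using unit_ball_maximizer_eq_sgn sel by fastforce
  show ?thesis
    unfolding rt_regret_def
    by (simp only: rt_action_eq[OF rounds] mean_explore_noise_def) (subst sel_eq, measurable)
qed

lemma rt_expected_regret_le:
  assumes Pr: "prob_space Pr" and indep: "prob_space.indep_vars Pr (\<lambda>_. borel) \<eta> UNIV"
    and noise: "\<And>t. integrable Pr (\<eta> t)" "\<And>t. (\<integral>\<omega>. \<eta> t \<omega> \<partial>Pr) = 0" "\<And>t. subgaussian1 Pr (\<eta> t)"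
    and sel: "\<And>v. norm (sel v) \<le> 1" "\<And>v x. norm x \<le> 1 \<Longrightarrow> x \<bullet> v \<le> sel v \<bullet> v"
    and xstar: "norm xstar \<le> 1"
    and \<theta>: "0 < \<phi>min" "\<phi>min \<le> norm \<theta>" "norm \<theta> \<le> \<phi>max"
    and bias: "(norm (\<theta> - Bh *v (transpose Bh *v \<theta>)))\<^sup>2 \<le> (norm \<theta>)\<^sup>2 * \<epsilon>\<^sup>2"
    and N: "4 \<le> N"
  shows "integrable Pr (\<lambda>\<omega>. rt_regret Bh a sel \<theta> xstar (\<lambda>t. \<eta> t \<omega>) N)
    \<and> (\<integral>\<omega>. rt_regret Bh a sel \<theta> xstar (\<lambda>t. \<eta> t \<omega>) N \<partial>Pr)
        \<le> (4 * \<phi>max + 192 / \<phi>min) * (CARD('r) * sqrt N + N * \<epsilon>\<^sup>2)"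
proof -
  interpret prob_space Pr by (rule Pr)
  let ?R = "\<lambda>\<omega>. rt_regret Bh a sel \<theta> xstar (\<lambda>t. \<eta> t \<omega>) N"
  let ?Z = "\<lambda>\<omega>. \<Sum>i<CARD('r). (mean_explore_noise CARD('r) (rt_N2 CARD('r) N) (\<lambda>t. \<eta> t \<omega>) i)\<^sup>2"
  define b where "b = (norm (\<theta> - Bh *v (transpose Bh *v \<theta>)))\<^sup>2"
  have rounds: "\<And>i. i < CARD('r) \<Longrightarrow> explore_rounds CARD('r) (rt_N2 CARD('r) N) i \<noteq> {}"
    using explore_rounds_nonempty[OF zero_less_card_finite _ N] by blast
  have "\<theta> \<noteq> 0" using \<theta> by auto
  have meas: "\<eta> t \<in> borel_measurable Pr" for t using indep by (simp add: indep_vars_def)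
  note Z = integral_sum_mean_explore_noise_sq_le[OF indep noise zero_less_card_finite[where 'a = 'r] N]
  have R: "integrable Pr ?R"
    by (rule integrable_const_bound[where B = "2 * norm \<theta> * N"])
      (use abs_rt_regret_le[OF sel(1) xstar] borel_measurable_rt_regret[OF sel rounds meas] in auto)
  have "(\<integral>\<omega>. ?R \<omega> \<partial>Pr)
      \<le> (\<integral>\<omega>. 2 * norm \<theta> * rt_N2 CARD('r) N + 4 * real N / norm \<theta> * (b + ?Z \<omega>) \<partial>Pr)"
    using Z(1) unfolding b_def
    by (intro integral_mono R rt_regret_le[OF sel xstar \<open>\<theta> \<noteq> 0\<close> rounds]) auto
  also have "\<dots> = 2 * norm \<theta> * rt_N2 CARD('r) N + 4 * real N / norm \<theta> * (b + (\<integral>\<omega>. ?Z \<omega> \<partial>Pr))"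
    using Z(1) by (simp add: prob_space)
  also have "\<dots> \<le> (4 * \<phi>max + 192 / \<phi>min) * (CARD('r) * sqrt N + N * \<epsilon>\<^sup>2)"
    using \<theta> bias Z(2) N unfolding b_def by (intro rt_regret_bound_le_rate) auto
  finally show ?thesis using R by simp
qed

end

lemma exploration_basisI:
  fixes Bh :: "real^'r::finite^'d::finite"
  assumes "transpose Bh ** Bh = mat 1" and "\<forall>i<CARD('r). norm (a i) = 1"
    and "\<forall>i j. i < CARD('r) \<longrightarrow> j < CARD('r) \<longrightarrow> i \<noteq> j \<longrightarrow> a i \<bullet> a j = 0"
    and "span (a ` {..<CARD('r)}) = range (\<lambda>v. Bh *v v)"
  shows "exploration_basis Bh a"
  using assms by unfold_locales (auto simp: dot_square_norm)

theorem theorem1: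
  fixes \<phi>min \<phi>max :: real
  assumes "0 < \<phi>min" and "\<phi>min \<le> \<phi>max"
  shows "\<exists>C>0. \<exists>N0::nat.
    \<forall>(Pr::'a measure) (\<eta>::nat \<Rightarrow> 'a \<Rightarrow> real) (B::real^'r::finite^'d::finite) (\<alpha>::real^'r)
      (Bh::real^'r^'d) (a::nat \<Rightarrow> real^'d) (P::(real^'d) set)
      (sel::real^'d \<Rightarrow> real^'d) (xstar::real^'d) (\<epsilon>::real) (N::nat).
      ( prob_space Pr
      \<and> prob_space.indep_vars Pr (\<lambda>_. borel) \<eta> UNIV
      \<and> (\<forall>t. integrable Pr (\<eta> t) \<and> (\<integral>\<omega>. \<eta> t \<omega> \<partial>Pr) = 0 \<and> subgaussian1 Pr (\<eta> t))
      \<and> transpose B ** B = mat 1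
      \<and> \<phi>min \<le> norm (B *v \<alpha>) \<and> norm (B *v \<alpha>) \<le> \<phi>max
      \<and> transpose Bh ** Bh = mat 1
      \<and> pairwise orthogonal P \<and> (\<forall>p\<in>P. norm p = 1)
      \<and> span P = {v. transpose B *v v = 0}
      \<and> sqrt (\<Sum>p\<in>P. (norm (transpose Bh *v p))\<^sup>2) \<le> \<epsilon>
      \<and> (\<forall>i<CARD('r). norm (a i) = 1)
      \<and> (\<forall>i j. i < CARD('r) \<longrightarrow> j < CARD('r) \<longrightarrow> i \<noteq> j \<longrightarrow> a i \<bullet> a j = 0)
      \<and> span (a ` {..<CARD('r)}) = range (\<lambda>v. Bh *v v)
      \<and> (\<forall>v. norm (sel v) \<le> 1 \<and> (\<forall>x. norm x \<le> 1 \<longrightarrow> x \<bullet> v \<le> sel v \<bullet> v))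
      \<and> norm xstar \<le> 1 \<and> (\<forall>x. norm x \<le> 1 \<longrightarrow> x \<bullet> (B *v \<alpha>) \<le> xstar \<bullet> (B *v \<alpha>))
      \<and> N0 \<le> N )
      \<longrightarrow> integrable Pr (\<lambda>\<omega>. rt_regret Bh a sel (B *v \<alpha>) xstar (\<lambda>t. \<eta> t \<omega>) N)
        \<and> (\<integral>\<omega>. rt_regret Bh a sel (B *v \<alpha>) xstar (\<lambda>t. \<eta> t \<omega>) N \<partial>Pr)
            \<le> C * (real CARD('r) * sqrt (real N) + real N * \<epsilon>\<^sup>2)"
proof -
  have C: "0 < 4 * \<phi>max + 192 / \<phi>min" using assms by (simp add: add_pos_pos)
  show ?thesis
  proof (intro exI[of _ "4 * \<phi>max + 192 / \<phi>min"] conjI[OF C] exI[of _ "4::nat"] allI impI,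
      elim conjE, goal_cases)
    case (1 Pr \<eta> B \<alpha> Bh a P sel xstar \<epsilon> N)
    then interpret exploration_basis Bh a by (intro exploration_basisI)
    have "(norm (B *v \<alpha> - Bh *v (transpose Bh *v (B *v \<alpha>))))\<^sup>2 \<le> (norm (B *v \<alpha>))\<^sup>2 * \<epsilon>\<^sup>2"
      by (rule power2_norm_projection_residual_le) (use 1 in auto)
    then show ?case using 1 assms by (intro rt_expected_regret_le) auto
  qed
qed

end
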